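(* Let $n \geq 3$, let $\overline{g}$ be the standard metric on the unit sphere $S^n\subset\mathbb{R}^{n+1}$, $f = x_{n+1}|_{S^n}$, $S_+^n = \{f\ge 0\}$. For $\delta > 0$ let $\tilde g_\delta$ be a smooth Riemannian metric on $S_+^n$ with $\tilde g_\delta = \overline{g}$ on $\{f \leq \delta\}$ and $\tilde g_\delta = (1 - e^{-\frac{1}{f-\delta}})^{\frac{4}{n-2}}\,\overline{g}$ on $\{\delta < f < 3\delta\}$. If $\delta > 0$ is sufficiently small, then the scalar curvature of $\tilde g_\delta$ is strictly greater than $n(n-1)$ in the region $\{\delta < f < 3\delta\}$. *)

theory Defs
  imports "HOL-Analysis.Analysis"
begin

text \<open>Local Riemannian geometry in a coordinate chart U of R^n (n = CARD('n)).
  A metric is a matrix-valued function G; G x $ i $ j = g_ij(x).\<close>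

definition pd :: "'n::finite \<Rightarrow> (real^'n \<Rightarrow> 'b::real_normed_vector) \<Rightarrow> real^'n \<Rightarrow> 'b" where
  "pd i h x = vector_derivative (\<lambda>t. h (x + t *\<^sub>R axis i 1)) (at 0)"

fun iter_pd :: "'n::finite list \<Rightarrow> (real^'n \<Rightarrow> 'b::real_normed_vector) \<Rightarrow> real^'n \<Rightarrow> 'b" where
  "iter_pd [] h = h"
| "iter_pd (i # is) h = pd i (iter_pd is h)"

definition smooth_on_chart :: "(real^'n::finite) set \<Rightarrow> (real^'n \<Rightarrow> real) \<Rightarrow> bool" where
  "smooth_on_chart U h \<longleftrightarrow> (\<forall>is. iter_pd is h differentiable_on U)"

definition riemannian_metric_on :: "(real^'n::finite) set \<Rightarrow> (real^'n \<Rightarrow> real^'n^'n) \<Rightarrow> bool" where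
  "riemannian_metric_on U G \<longleftrightarrow>
     (\<forall>i j. smooth_on_chart U (\<lambda>x. G x $ i $ j)) \<and>
     (\<forall>x\<in>U. \<forall>i j. G x $ i $ j = G x $ j $ i) \<and>
     (\<forall>x\<in>U. \<forall>v. v \<noteq> 0 \<longrightarrow> v \<bullet> (G x *v v) > 0)"

definition christoffel :: "(real^'n::finite \<Rightarrow> real^'n^'n) \<Rightarrow> 'n \<Rightarrow> 'n \<Rightarrow> 'n \<Rightarrow> real^'n \<Rightarrow> real" where
  "christoffel G k i j x = (1/2) * (\<Sum>l\<in>UNIV. matrix_inv (G x) $ k $ l *
      (pd i (\<lambda>y. G y $ j $ l) x + pd j (\<lambda>y. G y $ i $ l) x - pd l (\<lambda>y. G y $ i $ j) x))"

definition ricci :: "(real^'n::finite \<Rightarrow> real^'n^'n) \<Rightarrow> 'n \<Rightarrow> 'n \<Rightarrow> real^'n \<Rightarrow> real" where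
  "ricci G i j x = (\<Sum>k\<in>UNIV. pd k (christoffel G k i j) x - pd j (christoffel G k i k) x
      + (\<Sum>l\<in>UNIV. christoffel G k k l x * christoffel G l i j x
                   - christoffel G k j l x * christoffel G l i k x))"

definition scalar_curvature :: "(real^'n::finite \<Rightarrow> real^'n^'n) \<Rightarrow> real^'n \<Rightarrow> real" where
  "scalar_curvature G x = (\<Sum>i\<in>UNIV. \<Sum>j\<in>UNIV. matrix_inv (G x) $ i $ j * ricci G i j x)"

text \<open>Graph chart of the open upper hemisphere of S^n in R^(n+1) = R^n x R:
  y in the open unit ball maps to (y, sqrt(1-|y|^2)).\<close>
definition sphere_chart :: "real^'n::finite \<Rightarrow> (real^'n) \<times> real" where
  "sphere_chart y = (y, sqrt (1 - (norm y)^2))"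

definition height :: "real^'n::finite \<Rightarrow> real" where
  "height y = snd (sphere_chart y)"

definition round_metric :: "real^'n::finite \<Rightarrow> real^'n^'n" where
  "round_metric y = (\<chi> i j. pd i sphere_chart y \<bullet> pd j sphere_chart y)"

end

theory Submission
  imports Defs
begin

text \<open>In the graph chart \<open>y \<mapsto> (y, sqrt (1 - |y|\<^sup>2))\<close> the round metric is
  \<open>\<delta>\<^sub>i\<^sub>j + y\<^sub>i y\<^sub>j / (1 - |y|\<^sup>2)\<close>. For a radial conformal change \<open>A(|y|\<^sup>2)\<close> of it, with
  \<open>r = |y|\<^sup>2\<close> and \<open>a = A'/A\<close>, the Christoffel symbols and the Ricci tensor are explicit in \<open>y\<close>, and
  tracing gives
  \<open>R = (n - 1)(n + 2ra - 2n(1 - r)a - 4r(1 - r)a' - (n - 2)r(1 - r)a\<^sup>2) / A\<close>.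
  For \<open>A = (1 - exp (-1/(f - \<delta>)))\<^bsup>4/(n-2)\<^esup>\<close> with height \<open>f = sqrt (1 - r)\<close> the bracket after \<open>n\<close>
  equals \<open>2af (r(1 - 2s) - nfs\<^sup>2) / s\<^sup>2\<close>, \<open>s = f - \<delta> \<in> (0, 2\<delta>)\<close>, which is positive as soon as
  \<open>\<delta> < 1/(4n)\<close>. Since moreover \<open>0 < A < 1\<close>, the scalar curvature exceeds \<open>n(n - 1)\<close>.\<close>

section \<open>Partial derivatives in coordinates\<close>

definition kron :: "'a \<Rightarrow> 'a \<Rightarrow> real" where
  "kron i j = (if i = j then 1 else 0)"

lemma kron_commute: "kron i j = kron j i"
  by (simp add: kron_def)

lemma kron_same [simp]: "kron i i = 1"
  by (simp add: kron_def)

lemma sum_kron: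
  fixes i :: "'n::finite"
  shows "(\<Sum>m\<in>UNIV. kron i m * f m) = f i" and "(\<Sum>m\<in>UNIV. kron m i * f m) = f i"
    and "(\<Sum>m\<in>UNIV. f m * kron i m) = f i" and "(\<Sum>m\<in>UNIV. f m * kron m i) = f i"
  by (simp_all add: kron_def if_distrib[where f="\<lambda>x. x * _"] if_distrib[where f="\<lambda>x. _ * x"]
      cong del: if_weak_cong)

lemma sum_nth_square: "(\<Sum>m\<in>UNIV. (z::real^'n::finite) $ m * z $ m) = z \<bullet> z"
  by (simp add: inner_vec_def)

lemma axis_nth_kron: "axis l (1::real) $ i = kron l i"
  by (simp add: axis_def kron_def)

lemma has_derivative_vec_nth [derivative_intros]:
  "((\<lambda>x::real^'n. x $ i) has_derivative (\<lambda>h. h $ i)) F"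
  by (rule bounded_linear_imp_has_derivative[OF bounded_linear_vec_nth])

lemma pd_eq_derivative:
  assumes "(h has_derivative h') (at x)"
  shows "pd i h x = h' (axis i 1)"
proof -
  have line: "((\<lambda>t::real. x + t *\<^sub>R axis i 1) has_derivative (\<lambda>t. t *\<^sub>R axis i 1)) (at 0)"
    by (auto intro!: derivative_eq_intros)
  have "((\<lambda>t. h (x + t *\<^sub>R axis i 1)) has_derivative (\<lambda>t. h' (t *\<^sub>R axis i 1))) (at 0)"
    using diff_chain_at[OF line] assms by (simp add: o_def)
  moreover have "(\<lambda>t. h' (t *\<^sub>R axis i 1)) = (\<lambda>t. t *\<^sub>R h' (axis i 1))"
    using has_derivative_linear[OF assms] by (simp add: linear_scale)
  ultimately have "((\<lambda>t. h (x + t *\<^sub>R axis i 1)) has_vector_derivative h' (axis i 1)) (at 0)"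
    by (simp add: has_vector_derivative_def)
  then show ?thesis
    unfolding pd_def by (rule vector_derivative_at)
qed

lemma pd_cong_open:
  assumes "open S" "x \<in> S" "\<And>z. z \<in> S \<Longrightarrow> f z = g z"
  shows "pd i f x = pd i g x"
proof -
  let ?T = "(\<lambda>t::real. x + t *\<^sub>R axis i 1) -` S"
  have T: "open ?T" "0 \<in> ?T"
    using assms(2) by (auto intro!: open_vimage[OF assms(1)] continuous_intros)
  have "((\<lambda>t. f (x + t *\<^sub>R axis i 1)) has_vector_derivative v) (at 0) \<longleftrightarrow>
      ((\<lambda>t. g (x + t *\<^sub>R axis i 1)) has_vector_derivative v) (at 0)" for v
  proof
    assume "((\<lambda>t. f (x + t *\<^sub>R axis i 1)) has_vector_derivative v) (at 0)"
    then show "((\<lambda>t. g (x + t *\<^sub>R axis i 1)) has_vector_derivative v) (at 0)"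
      by (rule has_vector_derivative_transform_within_open[OF _ T]) (simp add: assms(3))
  next
    assume "((\<lambda>t. g (x + t *\<^sub>R axis i 1)) has_vector_derivative v) (at 0)"
    then show "((\<lambda>t. f (x + t *\<^sub>R axis i 1)) has_vector_derivative v) (at 0)"
      by (rule has_vector_derivative_transform_within_open[OF _ T]) (simp add: assms(3))
  qed
  then show ?thesis
    unfolding pd_def vector_derivative_def by simp
qed

lemma pd_radial_entry:
  fixes z :: "real^'n::finite"
  assumes "(A has_real_derivative A') (at (z \<bullet> z))" "(B has_real_derivative B') (at (z \<bullet> z))"
  shows "pd l (\<lambda>y. A (y \<bullet> y) * kron i j + B (y \<bullet> y) * (y $ i * y $ j)) z =
     2 * A' * z$l * kron i j + 2 * B' * z$l * (z$i * z$j) + B (z \<bullet> z) * (kron l i * z$j + kron l j * z$i)"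
proof -
  have "((\<lambda>y. A (y \<bullet> y) * kron i j + B (y \<bullet> y) * (y $ i * y $ j)) has_derivative
     (\<lambda>h. A' * (h \<bullet> z + z \<bullet> h) * kron i j + (B' * (h \<bullet> z + z \<bullet> h) * (z $ i * z $ j)
        + B (z \<bullet> z) * (h$i * z$j + z$i * h$j)))) (at z)"
    by (rule derivative_eq_intros refl
        | rule DERIV_compose_FDERIV[where g="\<lambda>y. y \<bullet> y" and x=z, OF assms(1)]
               DERIV_compose_FDERIV[where g="\<lambda>y. y \<bullet> y" and x=z, OF assms(2)])+
       (auto simp: algebra_simps)
  from pd_eq_derivative[OF this, of l] show ?thesis
    by (simp add: axis_nth_kron inner_axis inner_axis' algebra_simps)
qed

section \<open>The round metric in the graph chart\<close>

definition round_coeff :: "real \<Rightarrow> real" where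
  "round_coeff r = 1 / (1 - r)"

lemma round_coeff_mult: "r < 1 \<Longrightarrow> round_coeff r * (1 - r) = 1"
  by (simp add: round_coeff_def)

lemma round_coeff_deriv: "r < 1 \<Longrightarrow> (round_coeff has_real_derivative (round_coeff r)^2) (at r)"
  unfolding round_coeff_def
  by (auto intro!: derivative_eq_intros simp: power2_eq_square field_simps)

definition round_chart_metric :: "real^'n::finite \<Rightarrow> real^'n^'n" where
  "round_chart_metric z = (\<chi> i j. kron i j + round_coeff (z \<bullet> z) * (z $ i * z $ j))"

lemma height_eq: "height (y::real^'n::finite) = sqrt (1 - y \<bullet> y)"
  by (simp add: height_def sphere_chart_def power2_norm_eq_inner)

lemma round_metric_eq:
  fixes y :: "real^'n::finite"
  assumes "y \<bullet> y < 1"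
  shows "round_metric y = round_chart_metric y"
proof -
  have chart: "sphere_chart = (\<lambda>y::real^'n. (y, sqrt (1 - y \<bullet> y)))"
    by (auto simp: sphere_chart_def power2_norm_eq_inner)
  have pos: "0 < 1 - y \<bullet> y"
    using assms by simp
  have deriv: "((\<lambda>y::real^'n. (y, sqrt (1 - y \<bullet> y))) has_derivative
      (\<lambda>h. (h, (- (h \<bullet> y + y \<bullet> h)) * (inverse (sqrt (1 - y \<bullet> y)) / 2)))) (at y)"
    using pos by (auto intro!: derivative_eq_intros ext)
  have pd_chart: "pd i sphere_chart y = (axis i 1, - (y $ i) / sqrt (1 - y \<bullet> y))" for i
  proof -
    have "pd i sphere_chart y
        = (axis i 1, - (axis i 1 \<bullet> y + y \<bullet> axis i 1) * (inverse (sqrt (1 - y \<bullet> y)) / 2))"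
      unfolding chart by (rule pd_eq_derivative[OF deriv])
    then show ?thesis
      by (simp add: inner_axis inner_axis' field_simps)
  qed
  have "pd i sphere_chart y \<bullet> pd j sphere_chart y = kron i j + round_coeff (y \<bullet> y) * (y $ i * y $ j)" for i j
    unfolding pd_chart using pos
    by (simp add: inner_axis_axis kron_def round_coeff_def field_simps power2_eq_square[symmetric])
  then show ?thesis
    unfolding round_metric_def round_chart_metric_def by simp
qed

lemma matrix_inv_unique:
  fixes M N :: "real^'n::finite^'n"
  assumes "M ** N = mat 1" "N ** M = mat 1"
  shows "matrix_inv M = N"
proof -
  have inv: "M ** matrix_inv M = mat 1 \<and> matrix_inv M ** M = mat 1"
    unfolding matrix_inv_def by (rule someI_ex) (use assms in blast)
  have "matrix_inv M = matrix_inv M ** (M ** N)"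
    using assms(1) by simp
  also have "\<dots> = (matrix_inv M ** M) ** N"
    by (simp add: matrix_mul_assoc)
  also have "\<dots> = N"
    using inv by simp
  finally show ?thesis .
qed

lemma mat_one_kron: "(mat 1 :: real^'n::finite^'n) $ i $ j = kron i j"
  by (simp add: mat_def kron_def)

lemma sum_round_chart_metric_inverse:
  fixes z :: "real^'n::finite"
  assumes "z \<bullet> z < 1"
  defines "w \<equiv> round_coeff (z \<bullet> z)"
  shows "(\<Sum>k\<in>UNIV. (kron i k + w * (z $ i * z $ k)) * (kron k j - z $ k * z $ j)) = kron i j"
    and "(\<Sum>k\<in>UNIV. (kron i k - z $ i * z $ k) * (kron k j + w * (z $ k * z $ j))) = kron i j"
proof -
  have wr: "w * (1 - z \<bullet> z) = 1"
    using round_coeff_mult[OF assms(1)] by (simp add: w_def)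
  have "(\<Sum>k\<in>UNIV. (kron i k + w * (z $ i * z $ k)) * (kron k j - z $ k * z $ j))
     = (\<Sum>k\<in>UNIV. kron i k * (kron k j - z $ k * z $ j) + (z $ i * w) * (z $ k * kron k j)
           - (z $ i * z $ j * w) * (z $ k * z $ k))"
    by (intro sum.cong refl) (simp add: algebra_simps)
  also have "\<dots> = kron i j - z $ i * z $ j + (z $ i * w) * z $ j - (z $ i * z $ j * w) * (z \<bullet> z)"
    by (simp add: sum.distrib sum_subtractf sum_distrib_left[symmetric] sum_kron sum_nth_square)
  also have "\<dots> = kron i j"
    using wr by algebra
  finally show "(\<Sum>k\<in>UNIV. (kron i k + w * (z $ i * z $ k)) * (kron k j - z $ k * z $ j)) = kron i j" .
  have "(\<Sum>k\<in>UNIV. (kron i k - z $ i * z $ k) * (kron k j + w * (z $ k * z $ j)))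
     = (\<Sum>k\<in>UNIV. kron i k * (kron k j + z $ k * z $ j * w) - (z $ i) * (z $ k * kron k j)
           - (z $ i * z $ j * w) * (z $ k * z $ k))"
    by (intro sum.cong refl) (simp add: algebra_simps)
  also have "\<dots> = kron i j + z $ i * z $ j * w - z $ i * z $ j - (z $ i * z $ j * w) * (z \<bullet> z)"
    by (simp add: sum.distrib sum_subtractf sum_distrib_left[symmetric] sum_kron sum_nth_square)
  also have "\<dots> = kron i j"
    using wr by algebra
  finally show "(\<Sum>k\<in>UNIV. (kron i k - z $ i * z $ k) * (kron k j + w * (z $ k * z $ j))) = kron i j" .
qed

lemma matrix_inv_scaleR_round_chart_metric:
  fixes z :: "real^'n::finite"
  assumes "z \<bullet> z < 1" "c \<noteq> 0"
  shows "matrix_inv (c *\<^sub>R round_chart_metric z) = (\<chi> i j. (kron i j - z $ i * z $ j) / c)"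
proof (rule matrix_inv_unique)
  have cancel: "c * x * (y / c) = x * y" "x / c * (c * y) = x * y" for x y
    using assms(2) by simp_all
  show "(c *\<^sub>R round_chart_metric z) ** (\<chi> i j. (kron i j - z $ i * z $ j) / c) = mat 1"
    unfolding vec_eq_iff matrix_matrix_mult_def
    by (simp only: vec_lambda_beta vector_scaleR_component real_scaleR_def round_chart_metric_def
        mat_one_kron cancel sum_round_chart_metric_inverse[OF assms(1)] simp_thms)
  show "(\<chi> i j. (kron i j - z $ i * z $ j) / c) ** (c *\<^sub>R round_chart_metric z) = mat 1"
    unfolding vec_eq_iff matrix_matrix_mult_def
    by (simp only: vec_lambda_beta vector_scaleR_component real_scaleR_def round_chart_metric_def
        mat_one_kron cancel sum_round_chart_metric_inverse[OF assms(1)] simp_thms)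
qed

section \<open>Radially conformal metrics in the graph chart\<close>

definition conformal_christoffel :: "(real \<Rightarrow> real) \<Rightarrow> real^'n::finite \<Rightarrow> 'n \<Rightarrow> 'n \<Rightarrow> 'n \<Rightarrow> real" where
  "conformal_christoffel a z k i j = a (z \<bullet> z) * (z$i * kron j k + z$j * kron i k)
     + (1 - a (z \<bullet> z) * (1 - z \<bullet> z)) * kron i j * z$k
     + (round_coeff (z \<bullet> z) - a (z \<bullet> z)) * (z$i * z$j) * z$k"

lemma pd_conformal_christoffel:
  fixes y :: "real^'n::finite"
  assumes "y \<bullet> y < 1" "(a has_real_derivative a') (at (y \<bullet> y))"
  defines "r \<equiv> y \<bullet> y"
  shows "pd m (\<lambda>z. conformal_christoffel a z k i j) y =
     2 * a' * y$m * (y$i * kron j k + y$j * kron i k) + a r * (kron m i * kron j k + kron m j * kron i k)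
   + (2 * a r - 2 * a' * (1 - r)) * y$m * kron i j * y$k + (1 - a r * (1 - r)) * kron i j * kron m k
   + 2 * ((round_coeff r)^2 - a') * y$m * (y$i * y$j) * y$k
   + (round_coeff r - a r) * (kron m i * y$j * y$k + y$i * kron m j * y$k + y$i * y$j * kron m k)"
proof -
  have "((\<lambda>z. conformal_christoffel a z k i j) has_derivative (\<lambda>h.
      a' * (h \<bullet> y + y \<bullet> h) * (y$i * kron j k + y$j * kron i k) + a (y \<bullet> y) * (h$i * kron j k + h$j * kron i k)
    + (- (a' * (h \<bullet> y + y \<bullet> h) * (1 - y \<bullet> y) - a (y \<bullet> y) * (h \<bullet> y + y \<bullet> h))) * kron i j * y$k
    + (1 - a (y \<bullet> y) * (1 - y \<bullet> y)) * kron i j * h$k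
    + ((h \<bullet> y + y \<bullet> h) * (round_coeff (y \<bullet> y))^2 - a' * (h \<bullet> y + y \<bullet> h)) * (y$i * y$j) * y$k
    + (round_coeff (y \<bullet> y) - a (y \<bullet> y)) * ((h$i * y$j + y$i * h$j) * y$k + (y$i * y$j) * h$k))) (at y)"
    unfolding conformal_christoffel_def
    apply (rule derivative_eq_intros refl
       | rule DERIV_compose_FDERIV[where g="\<lambda>y. y \<bullet> y" and x=y, OF assms(2)]
              DERIV_compose_FDERIV[where g="\<lambda>y. y \<bullet> y" and x=y, OF round_coeff_deriv[OF assms(1)]])+
    by (simp add: algebra_simps)
  from pd_eq_derivative[OF this, of m] show ?thesis
    by (simp add: axis_nth_kron inner_axis inner_axis' algebra_simps r_def)
qed

lemma sum_kron_linear_product: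
  fixes z :: "real^'n::finite"
  shows "(\<Sum>l\<in>UNIV. (p * kron l k + q * z$l + s * kron j l) * (t * kron k l + u * z$l + x * kron i l))
   = p*t + p*u*z$k + p*x*kron k i + q*t*z$k + q*u*(z \<bullet> z) + q*x*z$i + s*t*kron j k + s*u*z$j + s*x*kron j i"
proof -
  have "(\<Sum>l\<in>UNIV. (p * kron l k + q * z$l + s * kron j l) * (t * kron k l + u * z$l + x * kron i l))
    = (\<Sum>l\<in>UNIV. (p*t) * (kron l k * kron k l) + (p*u) * (kron l k * z$l) + (p*x) * (kron l k * kron i l)
       + (q*t) * (z$l * kron k l) + (q*u) * (z$l * z$l) + (q*x) * (z$l * kron i l)
       + (s*t) * (kron j l * kron k l) + (s*u) * (kron j l * z$l) + (s*x) * (kron j l * kron i l))"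
    by (rule sum.cong) (simp_all add: algebra_simps)
  also have "\<dots> = p*t + p*u*z$k + p*x*kron k i + q*t*z$k + q*u*(z \<bullet> z) + q*x*z$i
      + s*t*kron j k + s*u*z$j + s*x*kron j i"
    by (simp only: sum.distrib sum_distrib_left[symmetric] sum_kron sum_nth_square kron_same mult_1_right;
        simp add: kron_commute)
  finally show ?thesis .
qed

context
  fixes y :: "real^'n::finite" and a :: "real \<Rightarrow> real" and a' :: real
  assumes y_in_ball: "y \<bullet> y < 1" and a_deriv: "(a has_real_derivative a') (at (y \<bullet> y))"
begin

lemma sum_pd_conformal_christoffel_contract:
  defines "n \<equiv> real CARD('n)" and "r \<equiv> y \<bullet> y"
  shows "(\<Sum>k\<in>UNIV. pd k (\<lambda>z. conformal_christoffel a z k i j) y) =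
   4 * a' * (y$i * y$j) + 2 * a r * kron i j + (2 * a r - 2 * a' * (1 - r)) * r * kron i j
   + n * (1 - a r * (1 - r)) * kron i j + 2 * ((round_coeff r)^2 - a') * r * (y$i * y$j)
   + (n + 2) * (round_coeff r - a r) * (y$i * y$j)"
proof -
  let ?r = "y \<bullet> y" let ?a = "a ?r" let ?w = "round_coeff ?r" let ?b = "1 - a ?r * (1 - ?r)" let ?c = "?w - ?a"
  have "(\<Sum>k\<in>UNIV. pd k (\<lambda>z. conformal_christoffel a z k i j) y) = (\<Sum>k\<in>UNIV.
      (2*a'*y$i) * (y$k * kron j k) + (2*a'*y$j) * (y$k * kron i k) + ?a * (kron k i * kron j k) + ?a * (kron k j * kron i k)
      + ((2 * ?a - 2 * a' * (1 - ?r)) * kron i j) * (y$k * y$k) + ?b * kron i j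
      + (2 * (?w^2 - a') * (y$i * y$j)) * (y$k * y$k) + (?c * y$j) * (kron k i * y$k) + (?c * y$i) * (kron k j * y$k)
      + ?c * (y$i * y$j))"
    by (rule sum.cong) (simp_all add: pd_conformal_christoffel[OF y_in_ball a_deriv] algebra_simps)
  also have "\<dots> = (2*a'*y$i) * y$j + (2*a'*y$j) * y$i + ?a * kron j i + ?a * kron i j
      + ((2 * ?a - 2 * a' * (1 - ?r)) * kron i j) * ?r + real CARD('n) * (?b * kron i j)
      + (2 * (?w^2 - a') * (y$i * y$j)) * ?r + (?c * y$j) * y$i + (?c * y$i) * y$j
      + real CARD('n) * (?c * (y$i * y$j))"
    by (simp only: sum.distrib sum_distrib_left[symmetric] sum_kron sum_nth_square sum_constant; simp add: algebra_simps)
  finally show ?thesis by (simp add: kron_commute[of j i] algebra_simps n_def r_def)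
qed

lemma sum_pd_conformal_christoffel_trace:
  defines "n \<equiv> real CARD('n)" and "r \<equiv> y \<bullet> y"
  shows "(\<Sum>k\<in>UNIV. pd j (\<lambda>z. conformal_christoffel a z k i k) y) =
   2 * a' * n * (y$i * y$j) + 2 * a' * (y$i * y$j) + a r * n * kron i j + a r * kron i j
   + (2 * a r - 2 * a' * (1 - r)) * (y$i * y$j) + (1 - a r * (1 - r)) * kron i j
   + 2 * ((round_coeff r)^2 - a') * r * (y$i * y$j)
   + (round_coeff r - a r) * r * kron i j + 2 * (round_coeff r - a r) * (y$i * y$j)"
proof -
  let ?r = "y \<bullet> y" let ?a = "a ?r" let ?w = "round_coeff ?r" let ?b = "1 - a ?r * (1 - ?r)" let ?c = "?w - ?a"
  have "(\<Sum>k\<in>UNIV. pd j (\<lambda>z. conformal_christoffel a z k i k) y) = (\<Sum>k\<in>UNIV.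
      2*a'*y$j*y$i + (2*a'*y$j) * (y$k * kron i k) + ?a * kron j i + ?a * (kron j k * kron i k)
      + ((2 * ?a - 2 * a' * (1 - ?r)) * y$j) * (kron i k * y$k) + ?b * (kron i k * kron j k)
      + (2 * (?w^2 - a') * (y$j * y$i)) * (y$k * y$k) + (?c * kron j i) * (y$k * y$k)
      + (?c * y$i) * (kron j k * y$k) + (?c * y$i) * (y$k * kron j k))"
    by (rule sum.cong) (simp_all add: pd_conformal_christoffel[OF y_in_ball a_deriv] algebra_simps)
  also have "\<dots> = real CARD('n) * (2*a'*y$j*y$i) + (2*a'*y$j) * y$i + real CARD('n) * (?a * kron j i) + ?a * kron i j
      + ((2 * ?a - 2 * a' * (1 - ?r)) * y$j) * y$i + ?b * kron j i
      + (2 * (?w^2 - a') * (y$j * y$i)) * ?r + (?c * kron j i) * ?r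
      + (?c * y$i) * y$j + (?c * y$i) * y$j"
    by (simp only: sum.distrib sum_distrib_left[symmetric] sum_kron sum_nth_square sum_constant; simp add: algebra_simps)
  finally show ?thesis by (simp add: kron_commute[of j i] algebra_simps n_def r_def)
qed

lemma sum_conformal_christoffel_trace_product:
  defines "n \<equiv> real CARD('n)" and "r \<equiv> y \<bullet> y"
  shows "(\<Sum>k\<in>UNIV. \<Sum>l\<in>UNIV. conformal_christoffel a y k k l * conformal_christoffel a y l i j) =
   ((n + 1) * a r + (1 - a r * (1 - r)) + (round_coeff r - a r) * r) *
   (2 * a r * (y$i * y$j) + (1 - a r * (1 - r)) * r * kron i j
    + (round_coeff r - a r) * r * (y$i * y$j))"
proof -
  let ?r = "y \<bullet> y" let ?a = "a ?r" let ?w = "round_coeff ?r" let ?b = "1 - a ?r * (1 - ?r)" let ?c = "?w - ?a"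
  let ?V = "(real CARD('n) + 1) * ?a + ?b + ?c * ?r"
  have V: "(\<Sum>k\<in>UNIV. conformal_christoffel a y k k l) = ?V * y$l" for l
  proof -
    have "(\<Sum>k\<in>UNIV. conformal_christoffel a y k k l) = (\<Sum>k\<in>UNIV. ?a * (y$k * kron l k) + ?a * y$l + ?b * (kron k l * y$k)
        + (?c * y$l) * (y$k * y$k))"
      by (rule sum.cong) (simp_all add: conformal_christoffel_def algebra_simps)
    also have "\<dots> = ?a * y$l + real CARD('n) * (?a * y$l) + ?b * y$l + (?c * y$l) * ?r"
      by (simp only: sum.distrib sum_distrib_left[symmetric] sum_kron sum_nth_square sum_constant; simp add: algebra_simps)
    finally show ?thesis by (simp add: algebra_simps n_def r_def)
  qed
  have "(\<Sum>k\<in>UNIV. \<Sum>l\<in>UNIV. conformal_christoffel a y k k l * conformal_christoffel a y l i j)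
      = (\<Sum>l\<in>UNIV. \<Sum>k\<in>UNIV. conformal_christoffel a y k k l * conformal_christoffel a y l i j)"
    by (rule sum.swap)
  also have "\<dots> = (\<Sum>l\<in>UNIV. ?V * y$l * conformal_christoffel a y l i j)"
    by (simp add: sum_distrib_right[symmetric] V)
  also have "\<dots> = (\<Sum>l\<in>UNIV. (?V * ?a * y$i) * (y$l * kron j l) + (?V * ?a * y$j) * (y$l * kron i l)
      + (?V * ?b * kron i j) * (y$l * y$l) + (?V * ?c * (y$i * y$j)) * (y$l * y$l))"
    by (rule sum.cong) (simp_all add: conformal_christoffel_def algebra_simps)
  also have "\<dots> = (?V * ?a * y$i) * y$j + (?V * ?a * y$j) * y$i + (?V * ?b * kron i j) * ?r
      + (?V * ?c * (y$i * y$j)) * ?r"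
    by (simp only: sum.distrib sum_distrib_left[symmetric] sum_kron sum_nth_square sum_constant; simp add: algebra_simps)
  finally show ?thesis by (simp add: algebra_simps n_def r_def)
qed

lemma sum_conformal_christoffel_cross_product:
  defines "n \<equiv> real CARD('n)" and "r \<equiv> y \<bullet> y"
  shows "(\<Sum>k\<in>UNIV. \<Sum>l\<in>UNIV. conformal_christoffel a y k j l * conformal_christoffel a y l i k) =
   2 * r * a r * (1 - a r * (1 - r)) * kron i j
   + ((n + 3) * (a r)^2 + 2 * a r * (1 - a r * (1 - r))
      + 4 * a r * (round_coeff r - a r) * r
      + 2 * (1 - a r * (1 - r)) * (round_coeff r - a r) * r
      + r^2 * (round_coeff r - a r)^2 + (1 - a r * (1 - r))^2) * (y$i * y$j)"
proof -
  let ?r = "y \<bullet> y" let ?a = "a ?r" let ?w = "round_coeff ?r" let ?b = "1 - a ?r * (1 - ?r)" let ?c = "?w - ?a"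
  have inner: "(\<Sum>l\<in>UNIV. conformal_christoffel a y k j l * conformal_christoffel a y l i k) =
      (?a*y$j)*(?a*y$i) + (?a*y$j)*(?b*kron i k + ?c*y$i*y$k)*y$k + (?a*y$j)*(?a*y$k)*kron k i
      + (?a*kron j k + ?c*y$j*y$k)*(?a*y$i)*y$k + (?a*kron j k + ?c*y$j*y$k)*(?b*kron i k + ?c*y$i*y$k)*?r
      + (?a*kron j k + ?c*y$j*y$k)*(?a*y$k)*y$i + (?b*y$k)*(?a*y$i)*kron j k + (?b*y$k)*(?b*kron i k + ?c*y$i*y$k)*y$j
      + (?b*y$k)*(?a*y$k)*kron j i" for k
  proof -
    have "(\<Sum>l\<in>UNIV. conformal_christoffel a y k j l * conformal_christoffel a y l i k) = (\<Sum>l\<in>UNIV.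
       ((?a*y$j) * kron l k + (?a*kron j k + ?c*y$j*y$k) * y$l + (?b*y$k) * kron j l) *
       ((?a*y$i) * kron k l + (?b*kron i k + ?c*y$i*y$k) * y$l + (?a*y$k) * kron i l))"
      by (rule sum.cong) (simp_all add: conformal_christoffel_def algebra_simps)
    then show ?thesis by (simp only: sum_kron_linear_product)
  qed
  have "(\<Sum>k\<in>UNIV. \<Sum>l\<in>UNIV. conformal_christoffel a y k j l * conformal_christoffel a y l i k) = (\<Sum>k\<in>UNIV.
      (?a*?a*y$i*y$j) + (?a*?b*y$j) * (kron i k * y$k) + (?a*?c*y$j*y$i) * (y$k*y$k) + (?a*?a*y$j) * (y$k * kron k i)
      + (?a*?a*y$i) * (kron j k * y$k) + (?a*?c*y$j*y$i) * (y$k*y$k)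
      + (?r*?a*?b) * (kron j k * kron i k) + (?r*?a*?c*y$i) * (kron j k * y$k) + (?r*?c*?b*y$j) * (y$k * kron i k)
      + (?r*?c*?c*y$i*y$j) * (y$k*y$k)
      + (?a*?a*y$i) * (kron j k * y$k) + (?a*?c*y$i*y$j) * (y$k*y$k)
      + (?b*?a*y$i) * (y$k * kron j k) + (?b*?b*y$j) * (y$k * kron i k) + (?b*?c*y$i*y$j) * (y$k*y$k)
      + (?b*?a*kron j i) * (y$k*y$k))"
    by (rule sum.cong) (simp_all add: inner algebra_simps)
  also have "\<dots> = real CARD('n) * (?a*?a*y$i*y$j) + (?a*?b*y$j) * y$i + (?a*?c*y$j*y$i) * ?r + (?a*?a*y$j) * y$i
      + (?a*?a*y$i) * y$j + (?a*?c*y$j*y$i) * ?r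
      + (?r*?a*?b) * kron i j + (?r*?a*?c*y$i) * y$j + (?r*?c*?b*y$j) * y$i
      + (?r*?c*?c*y$i*y$j) * ?r
      + (?a*?a*y$i) * y$j + (?a*?c*y$i*y$j) * ?r
      + (?b*?a*y$i) * y$j + (?b*?b*y$j) * y$i + (?b*?c*y$i*y$j) * ?r
      + (?b*?a*kron j i) * ?r"
    by (simp only: sum.distrib sum_distrib_left[symmetric] sum_kron sum_nth_square sum_constant; simp add: algebra_simps)
  finally show ?thesis unfolding kron_commute[of j i] by (simp add: algebra_simps power2_eq_square n_def r_def)
qed

lemma conformal_ricci_contraction:
  defines "n \<equiv> real CARD('n)" and "r \<equiv> y \<bullet> y"
  shows "(\<Sum>k\<in>UNIV. pd k (\<lambda>z. conformal_christoffel a z k i j) y)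
     - (\<Sum>k\<in>UNIV. pd j (\<lambda>z. conformal_christoffel a z k i k) y)
     + (\<Sum>k\<in>UNIV. \<Sum>l\<in>UNIV. conformal_christoffel a y k k l * conformal_christoffel a y l i j)
     - (\<Sum>k\<in>UNIV. \<Sum>l\<in>UNIV. conformal_christoffel a y k j l * conformal_christoffel a y l i k)
   = ((n - 1) + ((2*n - 1) * r - 2 * (n - 1)) * a r - 2 * r * (1 - r) * a' - (n - 2) * r * (1 - r) * (a r)^2)
       * kron i j
     + round_coeff r * ((n - 1) + ((2*n - 1) * r - n) * a r - 2 * (n - 2 + r) * (1 - r) * a'
       + (n - 2) * (1 - r)^2 * (a r)^2) * (y$i * y$j)"
  unfolding sum_pd_conformal_christoffel_contract sum_pd_conformal_christoffel_trace
    sum_conformal_christoffel_trace_product sum_conformal_christoffel_cross_product n_def r_def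
  using round_coeff_mult[OF y_in_ball] by algebra

end

lemma sum_inverse_radial_trace:
  fixes y :: "real^'n::finite"
  shows "(\<Sum>i\<in>UNIV. \<Sum>j\<in>UNIV. (kron i j - y$i * y$j) * (\<alpha> * kron i j + \<beta> * (y$i * y$j)))
       = \<alpha> * (real CARD('n) - y \<bullet> y) + \<beta> * (1 - y \<bullet> y) * (y \<bullet> y)"
proof -
  have "(\<Sum>j\<in>UNIV. (kron i j - y$i * y$j) * (\<alpha> * kron i j + \<beta> * (y$i * y$j)))
      = \<alpha> + (\<beta> - \<alpha> - \<beta> * (y \<bullet> y)) * (y$i * y$i)" for i
  proof -
    have "(\<Sum>j\<in>UNIV. (kron i j - y$i * y$j) * (\<alpha> * kron i j + \<beta> * (y$i * y$j)))
      = (\<Sum>j\<in>UNIV. \<alpha> * (kron i j * kron i j) + (\<beta> * y$i) * (kron i j * y$j)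
          - (\<alpha> * y$i) * (y$j * kron i j) - (\<beta> * y$i * y$i) * (y$j * y$j))"
      by (rule sum.cong) (simp_all add: algebra_simps)
    also have "\<dots> = \<alpha> + (\<beta> * y$i) * y$i - (\<alpha> * y$i) * y$i - (\<beta> * y$i * y$i) * (y \<bullet> y)"
      by (simp only: sum.distrib sum_subtractf sum_distrib_left[symmetric] sum_kron sum_nth_square
          kron_same mult_1_right)
    finally show ?thesis
      by (simp add: algebra_simps)
  qed
  then have "(\<Sum>i\<in>UNIV. \<Sum>j\<in>UNIV. (kron i j - y$i * y$j) * (\<alpha> * kron i j + \<beta> * (y$i * y$j)))
      = real CARD('n) * \<alpha> + (\<beta> - \<alpha> - \<beta> * (y \<bullet> y)) * (y \<bullet> y)"
    by (simp only: sum.distrib sum_distrib_left[symmetric] sum_nth_square sum_constant)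
  then show ?thesis
    by (simp add: algebra_simps)
qed

locale radial_conformal_chart =
  fixes U :: "(real^'n::finite) set" and G :: "real^'n \<Rightarrow> real^'n^'n" and A a :: "real \<Rightarrow> real"
  assumes open_U: "open U"
    and U_in_ball: "\<And>z. z \<in> U \<Longrightarrow> z \<bullet> z < 1"
    and metric_eq: "\<And>z. z \<in> U \<Longrightarrow> G z = A (z \<bullet> z) *\<^sub>R round_chart_metric z"
    and factor_pos: "\<And>z. z \<in> U \<Longrightarrow> 0 < A (z \<bullet> z)"
    and factor_deriv: "\<And>z. z \<in> U \<Longrightarrow> (A has_real_derivative A (z \<bullet> z) * a (z \<bullet> z)) (at (z \<bullet> z))"
begin

lemma metric_nth:
  "z \<in> U \<Longrightarrow> G z $ i $ j = A (z \<bullet> z) * kron i j + A (z \<bullet> z) * round_coeff (z \<bullet> z) * (z $ i * z $ j)"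
  by (simp add: metric_eq round_chart_metric_def algebra_simps)

lemma inverse_metric_nth:
  "z \<in> U \<Longrightarrow> matrix_inv (G z) $ i $ j = (kron i j - z $ i * z $ j) / A (z \<bullet> z)"
  using matrix_inv_scaleR_round_chart_metric[OF U_in_ball, of z "A (z \<bullet> z)"] factor_pos[of z]
  by (simp add: metric_eq)

lemma pd_metric:
  assumes z: "z \<in> U"
  defines "r \<equiv> z \<bullet> z"
  shows "pd m (\<lambda>y. G y $ i $ j) z = 2 * (A r * a r) * z$m * kron i j
     + 2 * (A r * a r * round_coeff r + A r * (round_coeff r)^2) * z$m * (z$i * z$j)
     + A r * round_coeff r * (kron m i * z$j + kron m j * z$i)"
proof -
  have "pd m (\<lambda>y. G y $ i $ j) z
      = pd m (\<lambda>y. A (y \<bullet> y) * kron i j + A (y \<bullet> y) * round_coeff (y \<bullet> y) * (y $ i * y $ j)) z"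
    by (rule pd_cong_open[OF open_U z]) (simp add: metric_nth)
  also have "\<dots> = 2 * (A r * a r) * z$m * kron i j
     + 2 * (A r * a r * round_coeff r + A r * (round_coeff r)^2) * z$m * (z$i * z$j)
     + A r * round_coeff r * (kron m i * z$j + kron m j * z$i)"
    unfolding r_def
    by (rule pd_radial_entry[where B="\<lambda>r. A r * round_coeff r"])
       (auto intro!: derivative_eq_intros factor_deriv[OF z] round_coeff_deriv U_in_ball[OF z])
  finally show ?thesis .
qed

lemma christoffel_first_kind:
  assumes z: "z \<in> U"
  defines "r \<equiv> z \<bullet> z"
  shows "pd i (\<lambda>y. G y $ j $ l) z + pd j (\<lambda>y. G y $ i $ l) z - pd l (\<lambda>y. G y $ i $ j) z
    = 2 * A r * (a r * (z$i * kron j l + z$j * kron i l) + (round_coeff r - a r) * kron i j * z$l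
      + (a r * round_coeff r + (round_coeff r)^2) * (z$i * z$j) * z$l)"
  unfolding pd_metric[OF z] r_def kron_commute[of j i] kron_commute[of l i] kron_commute[of l j]
  by (simp add: algebra_simps power2_eq_square)

lemma christoffel_eq:
  assumes z: "z \<in> U"
  shows "christoffel G k i j z = conformal_christoffel a z k i j"
proof -
  let ?r = "z \<bullet> z" let ?A = "A ?r" let ?a = "a ?r" let ?w = "round_coeff ?r"
  have A0: "?A \<noteq> 0"
    using factor_pos[OF z] by simp
  have wr: "?w * (1 - ?r) = 1"
    using round_coeff_mult U_in_ball[OF z] by blast
  define X where "X l = ?a * (z$i * kron j l + z$j * kron i l) + (?w - ?a) * kron i j * z$l
    + (?a * ?w + ?w^2) * (z$i * z$j) * z$l" for l
  have "christoffel G k i j z = 1/2 * (\<Sum>l\<in>UNIV. (kron k l - z$k * z$l) / ?A *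
      (pd i (\<lambda>y. G y $ j $ l) z + pd j (\<lambda>y. G y $ i $ l) z - pd l (\<lambda>y. G y $ i $ j) z))"
    unfolding christoffel_def inverse_metric_nth[OF z] ..
  also have "\<dots> = 1/2 * (\<Sum>l\<in>UNIV. 2 * (kron k l * X l) - 2 * z$k * (z$l * X l))"
  proof (intro arg_cong[where f="\<lambda>x. 1/2 * x"] sum.cong refl)
    fix l
    have "pd i (\<lambda>y. G y $ j $ l) z + pd j (\<lambda>y. G y $ i $ l) z - pd l (\<lambda>y. G y $ i $ j) z = 2 * ?A * X l"
      unfolding X_def by (rule christoffel_first_kind[OF z])
    then show "(kron k l - z$k * z$l) / ?A *
        (pd i (\<lambda>y. G y $ j $ l) z + pd j (\<lambda>y. G y $ i $ l) z - pd l (\<lambda>y. G y $ i $ j) z) =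
        2 * (kron k l * X l) - 2 * z$k * (z$l * X l)"
      using A0 by (simp add: field_simps)
  qed
  also have "\<dots> = X k - z$k * (\<Sum>l\<in>UNIV. z$l * X l)"
    by (simp add: sum_subtractf sum_distrib_left[symmetric] sum_kron)
  also have "(\<Sum>l\<in>UNIV. z$l * X l) = (\<Sum>l\<in>UNIV. ?a * z$i * (z$l * kron j l) + ?a * z$j * (z$l * kron i l)
      + (?w - ?a) * kron i j * (z$l * z$l) + (?a * ?w + ?w^2) * (z$i * z$j) * (z$l * z$l))"
    by (rule sum.cong) (simp_all add: X_def algebra_simps)
  also have "\<dots> = ?a * z$i * z$j + ?a * z$j * z$i + (?w - ?a) * kron i j * ?r
      + (?a * ?w + ?w^2) * (z$i * z$j) * ?r"
    by (simp only: sum.distrib sum_distrib_left[symmetric] sum_kron sum_nth_square)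
  finally show ?thesis
    unfolding conformal_christoffel_def X_def using wr by algebra
qed

lemma ricci_eq:
  assumes y: "y \<in> U" and a_deriv: "(a has_real_derivative a') (at (y \<bullet> y))"
  defines "n \<equiv> real CARD('n)" and "r \<equiv> y \<bullet> y"
  shows "ricci G i j y =
     ((n - 1) + ((2*n - 1) * r - 2 * (n - 1)) * a r - 2 * r * (1 - r) * a' - (n - 2) * r * (1 - r) * (a r)^2)
       * kron i j
     + round_coeff r * ((n - 1) + ((2*n - 1) * r - n) * a r - 2 * (n - 2 + r) * (1 - r) * a'
       + (n - 2) * (1 - r)^2 * (a r)^2) * (y$i * y$j)"
proof -
  have pd_christoffel: "pd m (christoffel G k i' j') y = pd m (\<lambda>z. conformal_christoffel a z k i' j') y"
    for m k i' j'
    by (rule pd_cong_open[OF open_U y]) (rule christoffel_eq)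
  have "ricci G i j y = (\<Sum>k\<in>UNIV. pd k (\<lambda>z. conformal_christoffel a z k i j) y)
     - (\<Sum>k\<in>UNIV. pd j (\<lambda>z. conformal_christoffel a z k i k) y)
     + (\<Sum>k\<in>UNIV. \<Sum>l\<in>UNIV. conformal_christoffel a y k k l * conformal_christoffel a y l i j)
     - (\<Sum>k\<in>UNIV. \<Sum>l\<in>UNIV. conformal_christoffel a y k j l * conformal_christoffel a y l i k)"
    unfolding ricci_def pd_christoffel christoffel_eq[OF y] by (simp add: sum.distrib sum_subtractf)
  then show ?thesis
    unfolding n_def r_def conformal_ricci_contraction[OF U_in_ball[OF y] a_deriv] .
qed

lemma scalar_curvature_eq:
  assumes y: "y \<in> U" and a_deriv: "(a has_real_derivative a') (at (y \<bullet> y))"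
  defines "n \<equiv> real CARD('n)" and "r \<equiv> y \<bullet> y"
  shows "scalar_curvature G y = (n - 1) * (n + 2 * r * a r - 2 * n * (1 - r) * a r
     - 4 * r * (1 - r) * a' - (n - 2) * r * (1 - r) * (a r)^2) / A r"
proof -
  define \<alpha> where "\<alpha> = (n - 1) + ((2*n - 1) * r - 2 * (n - 1)) * a r - 2 * r * (1 - r) * a'
    - (n - 2) * r * (1 - r) * (a r)^2"
  define \<beta> where "\<beta> = round_coeff r * ((n - 1) + ((2*n - 1) * r - n) * a r - 2 * (n - 2 + r) * (1 - r) * a'
    + (n - 2) * (1 - r)^2 * (a r)^2)"
  have "scalar_curvature G y
      = (\<Sum>i\<in>UNIV. \<Sum>j\<in>UNIV. (kron i j - y$i * y$j) * (\<alpha> * kron i j + \<beta> * (y$i * y$j))) / A r"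
    unfolding scalar_curvature_def inverse_metric_nth[OF y] ricci_eq[OF y a_deriv] \<alpha>_def \<beta>_def n_def r_def
    by (simp only: sum_divide_distrib times_divide_eq_left)
  also have "\<dots> = (\<alpha> * (n - r) + \<beta> * (1 - r) * r) / A r"
    unfolding sum_inverse_radial_trace n_def r_def ..
  also have "\<alpha> * (n - r) + \<beta> * (1 - r) * r = (n - 1) * (n + 2 * r * a r - 2 * n * (1 - r) * a r
     - 4 * r * (1 - r) * a' - (n - 2) * r * (1 - r) * (a r)^2)"
    unfolding \<alpha>_def \<beta>_def using round_coeff_mult[OF U_in_ball[OF y]] unfolding r_def by algebra
  finally show ?thesis .
qed

end

section \<open>The conformal factor\<close>

definition bump :: "real \<Rightarrow> real \<Rightarrow> real" where
  "bump d t = 1 - exp (- 1 / (t - d))"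

text \<open>Minus the logarithmic derivative of \<open>bump d\<close>.\<close>

definition bump_log_slope :: "real \<Rightarrow> real \<Rightarrow> real" where
  "bump_log_slope d t = exp (- 1 / (t - d)) / ((t - d)^2 * bump d t)"

lemma bump_bounds: "d < t \<Longrightarrow> 0 < bump d t \<and> bump d t < 1"
  using divide_neg_pos[of "-1" "t - d"] by (simp add: bump_def)

lemma bump_log_slope_pos: "d < t \<Longrightarrow> 0 < bump_log_slope d t"
  using bump_bounds[of d t] by (simp add: bump_log_slope_def)

lemma bump_deriv:
  "d < t \<Longrightarrow> (bump d has_real_derivative - (exp (- 1 / (t - d)) / (t - d)^2)) (at t)"
  unfolding bump_def by (auto intro!: derivative_eq_intros simp: power2_eq_square field_simps)

lemma bump_powr_deriv:
  assumes "d < t"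
  shows "((\<lambda>t. bump d t powr p) has_real_derivative - (p * bump d t powr p * bump_log_slope d t)) (at t)"
proof -
  have pos: "0 < bump d t"
    using bump_bounds[OF assms] by simp
  have "((\<lambda>t. bump d t powr p) has_real_derivative
      p * bump d t powr (p - 1) * (- (exp (- 1 / (t - d)) / (t - d)^2))) (at t)"
    using DERIV_fun_powr[OF bump_deriv[OF assms] pos, of p] by simp
  moreover have "p * bump d t powr (p - 1) * (- (exp (- 1 / (t - d)) / (t - d)^2))
      = - (p * bump d t powr p * bump_log_slope d t)"
    using pos assms by (simp add: bump_log_slope_def powr_diff field_simps)
  ultimately show ?thesis
    by simp
qed

lemma bump_log_slope_deriv:
  assumes "d < t"
  shows "(bump_log_slope d has_real_derivative
      bump_log_slope d t * (1 / (t - d)^2 - 2 / (t - d) + bump_log_slope d t)) (at t)"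
proof -
  let ?E = "exp (- 1 / (t - d))"
  have s: "t - d \<noteq> 0" and u: "bump d t \<noteq> 0"
    using assms bump_bounds[OF assms] by auto
  have num: "((\<lambda>t. exp (- 1 / (t - d))) has_real_derivative ?E / (t - d)^2) (at t)"
    using s by (auto intro!: derivative_eq_intros simp: power2_eq_square field_simps)
  have den: "((\<lambda>t. (t - d)^2 * bump d t) has_real_derivative
      2 * (t - d) * bump d t + (- (?E / (t - d)^2)) * (t - d)^2) (at t)"
    by (rule DERIV_mult[OF _ bump_deriv[OF assms]]) (auto intro!: derivative_eq_intros)
  have alg: "(E / x^2 * (x^2 * u) - E * (2 * x * u + (- (E / x^2)) * x^2)) / (x^2 * u * (x^2 * u))
      = E / (x^2 * u) * (1 / x^2 - 2 / x + E / (x^2 * u))" if "x \<noteq> 0" "u \<noteq> 0" for E x u :: real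
    using that by (simp add: field_simps power2_eq_square)
  have "(bump_log_slope d has_real_derivative
      (?E / (t - d)^2 * ((t - d)^2 * bump d t) - ?E * (2 * (t - d) * bump d t + (- (?E / (t - d)^2)) * (t - d)^2))
      / ((t - d)^2 * bump d t * ((t - d)^2 * bump d t))) (at t)"
    unfolding bump_log_slope_def by (rule DERIV_divide[OF num den]) (use s u in simp)
  moreover have "(?E / (t - d)^2 * ((t - d)^2 * bump d t)
      - ?E * (2 * (t - d) * bump d t + (- (?E / (t - d)^2)) * (t - d)^2))
      / ((t - d)^2 * bump d t * ((t - d)^2 * bump d t))
      = bump_log_slope d t * (1 / (t - d)^2 - 2 / (t - d) + bump_log_slope d t)"
    unfolding bump_log_slope_def using alg[OF s u] .
  ultimately show ?thesis
    by simp
qed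

text \<open>The conformal factor of the theorem and its logarithmic derivative as functions of \<open>r = y \<bullet> y\<close>,
  for which the height is \<open>sqrt (1 - r)\<close>.\<close>

definition bump_factor :: "real \<Rightarrow> real \<Rightarrow> real \<Rightarrow> real" where
  "bump_factor d p r = bump d (sqrt (1 - r)) powr p"

definition bump_factor_log_deriv :: "real \<Rightarrow> real \<Rightarrow> real \<Rightarrow> real" where
  "bump_factor_log_deriv d p r = p / 2 * bump_log_slope d (sqrt (1 - r)) / sqrt (1 - r)"

lemma sqrt_one_minus_deriv:
  "r < 1 \<Longrightarrow> ((\<lambda>r. sqrt (1 - r)) has_real_derivative - (1 / (2 * sqrt (1 - r)))) (at r)"
  by (auto intro!: derivative_eq_intros simp: field_simps)

context
  fixes d p r :: real
  assumes r_less_1: "r < 1" and above_d: "d < sqrt (1 - r)"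
begin

lemma bump_factor_deriv:
  "(bump_factor d p has_real_derivative bump_factor d p r * bump_factor_log_deriv d p r) (at r)"
proof -
  have "((\<lambda>r. bump d (sqrt (1 - r)) powr p) has_real_derivative
      (- (p * bump d (sqrt (1 - r)) powr p * bump_log_slope d (sqrt (1 - r)))) * (- (1 / (2 * sqrt (1 - r)))))
      (at r)"
    using DERIV_chain2[OF bump_powr_deriv[OF above_d] sqrt_one_minus_deriv[OF r_less_1]] .
  then show ?thesis
    unfolding bump_factor_def bump_factor_log_deriv_def using r_less_1 by (simp add: field_simps)
qed

lemma bump_factor_log_deriv_deriv:
  defines "f \<equiv> sqrt (1 - r)"
  shows "(bump_factor_log_deriv d p has_real_derivative
     - bump_factor_log_deriv d p r / (2 * f) * (1 / (f - d)^2 - 2 / (f - d) + bump_log_slope d f - 1 / f)) (at r)"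
proof -
  let ?f = "sqrt (1 - r)"
  have f0: "?f \<noteq> 0"
    using r_less_1 by simp
  have "((\<lambda>t. p / 2 * bump_log_slope d t / t) has_real_derivative
      (p / 2 * (bump_log_slope d ?f * (1 / (?f - d)^2 - 2 / (?f - d) + bump_log_slope d ?f)) * ?f
        - p / 2 * bump_log_slope d ?f * 1) / (?f * ?f)) (at ?f)"
    using above_d f0 by (intro DERIV_divide DERIV_cmult bump_log_slope_deriv DERIV_ident)
  from DERIV_chain2[OF this sqrt_one_minus_deriv[OF r_less_1]]
  have "(bump_factor_log_deriv d p has_real_derivative
      (p / 2 * (bump_log_slope d ?f * (1 / (?f - d)^2 - 2 / (?f - d) + bump_log_slope d ?f)) * ?f
        - p / 2 * bump_log_slope d ?f * 1) / (?f * ?f) * - (1 / (2 * ?f))) (at r)"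
    unfolding bump_factor_log_deriv_def .
  moreover have "(p / 2 * (bump_log_slope d ?f * (1 / (?f - d)^2 - 2 / (?f - d) + bump_log_slope d ?f)) * ?f
        - p / 2 * bump_log_slope d ?f * 1) / (?f * ?f) * - (1 / (2 * ?f))
      = - bump_factor_log_deriv d p r / (2 * ?f) * (1 / (?f - d)^2 - 2 / (?f - d) + bump_log_slope d ?f - 1 / ?f)"
    unfolding bump_factor_log_deriv_def using f0 by (simp add: field_simps)
  ultimately show ?thesis
    unfolding f_def by simp
qed

end

section \<open>Positivity in the band\<close>

text \<open>The \<open>a\<^sup>2\<close>-term cancels the contribution of the derivative of \<open>q\<close> to \<open>a'\<close>.\<close>

lemma bump_bracket_eq:
  fixes n d f q r :: real
  assumes "2 < n" "0 < f" "d \<noteq> f" "1 - r = f^2"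
  defines "a \<equiv> 4 / (n - 2) / 2 * q / f"
  defines "a' \<equiv> - a / (2 * f) * (1 / (f - d)^2 - 2 / (f - d) + q - 1 / f)"
  shows "2 * r * a - 2 * n * (1 - r) * a - 4 * r * (1 - r) * a' - (n - 2) * r * (1 - r) * a^2
      = 2 * a * f * (r * (1 - 2 * (f - d)) - n * f * (f - d)^2) / (f - d)^2"
proof -
  have q: "q = (n - 2) * a * f / 2"
    unfolding a_def using assms(1,2) by (simp add: field_simps)
  define s where "s = f - d"
  have "s \<noteq> 0"
    using assms(3) by (simp add: s_def)
  then show ?thesis
    unfolding a'_def assms(4) q s_def[symmetric] using assms(1,2) by (simp add: field_simps power2_eq_square)
qed

lemma band_estimate:
  fixes n d f r :: real
  assumes n: "3 \<le> n" and d: "0 < d" "d < 1 / (4 * n)" and f: "d < f" "f < 3 * d" and r: "1 - r = f^2"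
  shows "n * f * (f - d)^2 < r * (1 - 2 * (f - d))"
proof -
  define s where "s = f - d"
  have s: "0 < s" "s < 2 * d"
    using f by (simp_all add: s_def)
  have "d * 12 \<le> d * (n * 4)"
    using d n by (intro mult_left_mono) auto
  moreover have "d * (n * 4) < 1"
    using d n by (simp add: field_simps)
  ultimately have d12: "d < 1/12"
    by linarith
  have "f^2 < (3 * d)^2"
    using d f by (intro power_strict_mono) auto
  moreover have "d * d < (1/12) * (1/12)"
    using d d12 by (intro mult_strict_mono) auto
  ultimately have "9 / 10 < r"
    using r by (simp add: power2_eq_square)
  moreover have "2 / 3 < 1 - 2 * s"
    using s d12 by linarith
  ultimately have "9/10 * (2/3) < r * (1 - 2 * s)"
    by (intro mult_strict_mono) auto
  moreover have "n * f * s^2 < 1/2"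
  proof -
    have "f * s^2 < 3 * d * (2 * d)^2"
      using d f s by (intro mult_strict_mono power_strict_mono) auto
    then have "n * (f * s^2) < n * (12 * (d * d) * d)"
      using n by (simp add: power2_eq_square algebra_simps)
    also have "\<dots> < n * (12 * (1 / (4 * n) * (1 / (4 * n))) * (1/12))"
      using d d12 n by (intro mult_strict_left_mono mult_strict_mono) auto
    also have "\<dots> < 1/2"
      using n by (simp add: field_simps)
    finally show ?thesis
      by (simp add: algebra_simps)
  qed
  ultimately show ?thesis
    unfolding s_def by linarith
qed

lemma bump_bracket_pos:
  fixes n \<delta> r :: real
  defines "f \<equiv> sqrt (1 - r)"
  defines "a \<equiv> bump_factor_log_deriv \<delta> (4 / (n - 2)) r"
  defines "a' \<equiv> - a / (2 * f) * (1 / (f - \<delta>)^2 - 2 / (f - \<delta>) + bump_log_slope \<delta> f - 1 / f)"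
  assumes n: "3 \<le> n" and \<delta>: "0 < \<delta>" "\<delta> < 1 / (4 * n)" and r: "r < 1" and f: "\<delta> < f" "f < 3 * \<delta>"
  shows "0 < 2 * r * a - 2 * n * (1 - r) * a - 4 * r * (1 - r) * a' - (n - 2) * r * (1 - r) * a^2"
proof -
  have f_sq: "1 - r = f^2"
    using r by (simp add: f_def)
  have "0 < a"
    unfolding a_def bump_factor_log_deriv_def f_def[symmetric] using n f \<delta> bump_log_slope_pos[OF f(1)]
    by (intro divide_pos_pos mult_pos_pos) auto
  then have "0 < 2 * a * f * (r * (1 - 2 * (f - \<delta>)) - n * f * (f - \<delta>)^2) / (f - \<delta>)^2"
    using band_estimate[OF n \<delta> f f_sq] f \<delta> by (intro divide_pos_pos mult_pos_pos) auto
  also have "\<dots> = 2 * r * a - 2 * n * (1 - r) * a - 4 * r * (1 - r) * a' - (n - 2) * r * (1 - r) * a^2"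
    unfolding a'_def a_def bump_factor_log_deriv_def f_def[symmetric]
    by (rule bump_bracket_eq[symmetric]) (use n f \<delta> f_sq in auto)
  finally show ?thesis .
qed

lemma inner_self_less_one: "y \<in> ball (0::'a::real_inner) 1 \<Longrightarrow> y \<bullet> y < 1"
  by (simp add: power2_norm_eq_inner[symmetric] power_less_one_iff)

lemma radial_conformal_chart_band:
  fixes G :: "real^'n::finite \<Rightarrow> real^'n^'n"
  assumes "\<forall>y\<in>ball 0 1. \<delta> < height y \<and> height y < 3 * \<delta> \<longrightarrow>
      G y = (1 - exp (- 1 / (height y - \<delta>))) powr p *\<^sub>R round_metric y"
  shows "radial_conformal_chart {y \<in> ball 0 1. \<delta> < height y \<and> height y < 3 * \<delta>} G
      (bump_factor \<delta> p) (bump_factor_log_deriv \<delta> p)"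
proof
  have band: "{y \<in> ball 0 1. \<delta> < height y \<and> height y < 3 * \<delta>}
      = ball 0 1 \<inter> {y. \<delta> < sqrt (1 - y \<bullet> y)} \<inter> {y. sqrt (1 - y \<bullet> y) < 3 * \<delta>}"
    by (auto simp: height_eq)
  show "open {y \<in> ball 0 1. \<delta> < height y \<and> height y < 3 * \<delta>}"
    unfolding band by (intro open_Int open_ball open_Collect_less; auto intro!: continuous_intros)
next
  fix z :: "real^'n"
  assume z: "z \<in> {y \<in> ball 0 1. \<delta> < height y \<and> height y < 3 * \<delta>}"
  then show z_in_ball: "z \<bullet> z < 1"
    by (simp add: inner_self_less_one)
  have above: "\<delta> < sqrt (1 - z \<bullet> z)"
    using z by (simp add: height_eq)
  show "G z = bump_factor \<delta> p (z \<bullet> z) *\<^sub>R round_chart_metric z"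
    using assms z by (simp add: round_metric_eq[OF z_in_ball] bump_factor_def bump_def height_eq)
  show "0 < bump_factor \<delta> p (z \<bullet> z)"
    using bump_bounds[OF above] by (simp add: bump_factor_def)
  show "(bump_factor \<delta> p has_real_derivative
      bump_factor \<delta> p (z \<bullet> z) * bump_factor_log_deriv \<delta> p (z \<bullet> z)) (at (z \<bullet> z))"
    by (rule bump_factor_deriv[OF z_in_ball above])
qed

lemma scalar_curvature_band_gt:
  fixes G :: "real^'n::finite \<Rightarrow> real^'n^'n"
  defines "n \<equiv> real CARD('n)"
  assumes n: "3 \<le> n" and \<delta>: "0 < \<delta>" "\<delta> < 1 / (4 * n)"
    and metric: "\<forall>y\<in>ball 0 1. \<delta> < height y \<and> height y < 3 * \<delta> \<longrightarrow>
      G y = (1 - exp (- 1 / (height y - \<delta>))) powr (4 / (n - 2)) *\<^sub>R round_metric y"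
    and y: "y \<in> ball 0 1" "\<delta> < height y" "height y < 3 * \<delta>"
  shows "n * (n - 1) < scalar_curvature G y"
proof -
  let ?p = "4 / (n - 2)" let ?r = "y \<bullet> y" let ?f = "sqrt (1 - y \<bullet> y)"
  let ?A = "bump_factor \<delta> ?p ?r" let ?a = "bump_factor_log_deriv \<delta> ?p ?r"
  let ?a' = "- ?a / (2 * ?f) * (1 / (?f - \<delta>)^2 - 2 / (?f - \<delta>) + bump_log_slope \<delta> ?f - 1 / ?f)"
  interpret radial_conformal_chart "{y \<in> ball 0 1. \<delta> < height y \<and> height y < 3 * \<delta>}" G
      "bump_factor \<delta> ?p" "bump_factor_log_deriv \<delta> ?p"
    using metric unfolding n_def by (rule radial_conformal_chart_band)
  have r: "?r < 1" and f: "\<delta> < ?f" "?f < 3 * \<delta>"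
    using y by (simp_all add: inner_self_less_one height_eq)
  have "0 < bump \<delta> ?f" "bump \<delta> ?f < 1"
    using bump_bounds[OF f(1)] by simp_all
  then have A: "0 < ?A" "?A < 1"
    using n by (simp_all add: bump_factor_def powr01_less_one)
  have "n < n + 2 * ?r * ?a - 2 * n * (1 - ?r) * ?a - 4 * ?r * (1 - ?r) * ?a'
      - (n - 2) * ?r * (1 - ?r) * ?a^2" (is "_ < ?N")
    using bump_bracket_pos[OF n \<delta> r f] by linarith
  then have "(n - 1) * n < (n - 1) * ?N"
    using n by simp
  also have "\<dots> < (n - 1) * ?N / ?A"
  proof -
    have "(n - 1) * ?N * ?A < (n - 1) * ?N * 1"
      using \<open>n < ?N\<close> n A by (intro mult_strict_left_mono) auto
    then show ?thesis
      using A by (simp add: less_divide_eq)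
  qed
  also have "\<dots> = scalar_curvature G y"
    using y by (intro scalar_curvature_eq[OF _ bump_factor_log_deriv_deriv[OF r f(1)], folded n_def, symmetric])
       simp
  finally show ?thesis
    by (simp add: mult.commute)
qed

theorem proposition4p2:
  assumes "CARD('n::finite) \<ge> 3"
  shows "\<exists>\<delta>0>0. \<forall>\<delta>::real. 0 < \<delta> \<and> \<delta> < \<delta>0 \<longrightarrow>
    (\<forall>G :: real^'n \<Rightarrow> real^'n^'n.
       riemannian_metric_on (ball 0 1) G \<and>
       (\<forall>y\<in>ball 0 1. height y \<le> \<delta> \<longrightarrow> G y = round_metric y) \<and>
       (\<forall>y\<in>ball 0 1. \<delta> < height y \<and> height y < 3 * \<delta> \<longrightarrow>
          G y = (1 - exp (- 1 / (height y - \<delta>))) powr (4 / (real CARD('n) - 2)) *\<^sub>R round_metric y)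
       \<longrightarrow> (\<forall>y\<in>ball 0 1. \<delta> < height y \<and> height y < 3 * \<delta> \<longrightarrow>
              scalar_curvature G y > real CARD('n) * (real CARD('n) - 1)))"
proof -
  have n: "3 \<le> real CARD('n)"
    using assms by simp
  show ?thesis
  proof (intro exI[of _ "1 / (4 * real CARD('n))"] conjI allI impI ballI)
    show "0 < 1 / (4 * real CARD('n))"
      by simp
  qed (use scalar_curvature_band_gt[OF n] in blast)
qed

end
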